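(* Every finite poset $X$ of dimension at most one, i.e. one in which there are no elements $x<y<z$, is cofibrant in the model structure on $\mathbf{Pos}$.
   Context: The model structure on $\mathbf{Pos}$: a map $f$ of posets is a weak equivalence/fibration iff it is so as a functor in the Thomason model structure on $\mathbf{Cat}$ (where $F$ is a weak equivalence/fibration iff $\mathrm{Ex}^2NF$ is one in the Kan–Quillen model structure on $\mathbf{sSet}$); cofibrations are the maps with the left lifting property against acyclic fibrations; a poset is cofibrant if $\emptyset\to X$ is a cofibration. *)

theory Defs
  imports Main
begin

definition is_poset :: "'a set \<Rightarrow> ('a \<Rightarrow> 'a \<Rightarrow> bool) \<Rightarrow> bool" where
  "is_poset P le \<longleftrightarrow>
     (\<forall>x\<in>P. le x x) \<and>
     (\<forall>x\<in>P. \<forall>y\<in>P. le x y \<and> le y x \<longrightarrow> x = y) \<and>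
     (\<forall>x\<in>P. \<forall>y\<in>P. \<forall>z\<in>P. le x y \<and> le y z \<longrightarrow> le x z)"

definition poset_map :: "'a set \<Rightarrow> ('a \<Rightarrow> 'a \<Rightarrow> bool) \<Rightarrow> 'b set \<Rightarrow> ('b \<Rightarrow> 'b \<Rightarrow> bool)
    \<Rightarrow> ('a \<Rightarrow> 'b) \<Rightarrow> bool" where
  "poset_map P leP Q leQ f \<longleftrightarrow>
     (\<forall>x\<in>P. f x \<in> Q) \<and> (\<forall>x\<in>P. \<forall>y\<in>P. leP x y \<longrightarrow> leQ (f x) (f y))"

definition dim_le_one :: "'a set \<Rightarrow> ('a \<Rightarrow> 'a \<Rightarrow> bool) \<Rightarrow> bool" where
  "dim_le_one P le \<longleftrightarrow>
     \<not> (\<exists>x\<in>P. \<exists>y\<in>P. \<exists>z\<in>P. le x y \<and> x \<noteq> y \<and> le y z \<and> y \<noteq> z)"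

text \<open>sd1 n: poset (under inclusion) of nondegenerate simplices of Delta^n,
  i.e. nonempty subsets of [n]; Sd Delta^n is its nerve.
  sd2 n: poset of nonempty chains in sd1 n; Sd^2 Delta^n is its nerve.
  Since the nerve is fully faithful and Ex is right adjoint to Sd,
  (Ex^2 N P)_n = Hom(Sd^2 Delta^n, N P) = monotone maps sd2 n -> P.
  We represent such n-simplices extensionally (undefined outside sd2 n).\<close>

definition sd1 :: "nat \<Rightarrow> nat set set" where
  "sd1 n = {S. S \<subseteq> {..n} \<and> S \<noteq> {}}"

definition sd2 :: "nat \<Rightarrow> nat set set set" where
  "sd2 n = {C. C \<subseteq> sd1 n \<and> C \<noteq> {} \<and> (\<forall>S\<in>C. \<forall>T\<in>C. S \<subseteq> T \<or> T \<subseteq> S)}"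

definition ex2N :: "'a set \<Rightarrow> ('a \<Rightarrow> 'a \<Rightarrow> bool) \<Rightarrow> nat \<Rightarrow> (nat set set \<Rightarrow> 'a) set" where
  "ex2N P le n =
     {x. (\<forall>C\<in>sd2 n. x C \<in> P) \<and>
         (\<forall>C\<in>sd2 n. \<forall>D\<in>sd2 n. C \<subseteq> D \<longrightarrow> le (x C) (x D)) \<and>
         (\<forall>C. C \<notin> sd2 n \<longrightarrow> x C = undefined)}"

definition simp_op :: "(nat \<Rightarrow> nat) \<Rightarrow> nat \<Rightarrow> (nat set set \<Rightarrow> 'a) \<Rightarrow> (nat set set \<Rightarrow> 'a)" where
  "simp_op \<theta> m x = (\<lambda>C. if C \<in> sd2 m then x ((\<lambda>S. \<theta> ` S) ` C) else undefined)"

text \<open>Face map d_i : X_(m+1) -> X_m, induced by the coface delta_i : [m] -> [m+1].\<close>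

definition face :: "nat \<Rightarrow> nat \<Rightarrow> (nat set set \<Rightarrow> 'a) \<Rightarrow> (nat set set \<Rightarrow> 'a)" where
  "face m i x = simp_op (\<lambda>j. if j < i then j else Suc j) m x"

definition ex2N_map :: "('a \<Rightarrow> 'b) \<Rightarrow> nat \<Rightarrow> (nat set set \<Rightarrow> 'a) \<Rightarrow> (nat set set \<Rightarrow> 'b)" where
  "ex2N_map f n x = (\<lambda>C. if C \<in> sd2 n then f (x C) else undefined)"

text \<open>A map of posets f is an acyclic fibration iff Ex^2 N f is an acyclic Kan fibration,
  i.e. (Kan--Quillen) has the right lifting property against all boundary inclusions
  dSimplex^n -> Delta^n. A map dSimplex^0 = empty -> X is trivial; for n = m+1 >= 1
  a map dSimplex^n -> X is a family x_0..x_n of m-simplices with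
  d_i x_j = d_(j-1) x_i for i < j.\<close>

definition acyclic_fibration :: "'a set \<Rightarrow> ('a \<Rightarrow> 'a \<Rightarrow> bool) \<Rightarrow> 'b set \<Rightarrow> ('b \<Rightarrow> 'b \<Rightarrow> bool)
    \<Rightarrow> ('a \<Rightarrow> 'b) \<Rightarrow> bool" where
  "acyclic_fibration A leA B leB f \<longleftrightarrow>
     (\<forall>y\<in>ex2N B leB 0. \<exists>z\<in>ex2N A leA 0. ex2N_map f 0 z = y) \<and>
     (\<forall>m xs y.
        (\<forall>i\<le>Suc m. xs i \<in> ex2N A leA m) \<and>
        (\<forall>i j. i < j \<and> j \<le> Suc m \<and> 0 < m \<longrightarrow>
               face (m - 1) i (xs j) = face (m - 1) (j - 1) (xs i)) \<and>
        y \<in> ex2N B leB (Suc m) \<and>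
        (\<forall>i\<le>Suc m. face m i y = ex2N_map f m (xs i))
        \<longrightarrow> (\<exists>z\<in>ex2N A leA (Suc m).
               (\<forall>i\<le>Suc m. face m i z = xs i) \<and> ex2N_map f (Suc m) z = y))"

text \<open>Left lifting property of empty -> X against a map of posets p : A -> B.\<close>

definition lifts_against :: "'x set \<Rightarrow> ('x \<Rightarrow> 'x \<Rightarrow> bool) \<Rightarrow> 'a set \<Rightarrow> ('a \<Rightarrow> 'a \<Rightarrow> bool)
    \<Rightarrow> 'b set \<Rightarrow> ('b \<Rightarrow> 'b \<Rightarrow> bool) \<Rightarrow> ('a \<Rightarrow> 'b) \<Rightarrow> bool" where
  "lifts_against X leX A leA B leB p \<longleftrightarrow>
     (\<forall>g. poset_map X leX B leB g \<longrightarrow>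
        (\<exists>h. poset_map X leX A leA h \<and> (\<forall>x\<in>X. p (h x) = g x)))"

end

theory Submission
  imports Defs
begin

(*
  Remove a minimal element x of X and lift the rest by induction. As X has no chains
  x < y < z, the elements above x are maximal, so a lift h of g on X - {x} extends to X
  once we find a over g x and, for each z > x, some U z over g z above both a and h z.

  These come from the map Sd^2 Delta^n -> B that sends every chain through the vertex j
  to g z_j and all other chains to g x. Because Ex^2 N p is an acyclic Kan fibration, it
  lifts to A relative to the vertices (sent to h z_j): the lift is built skeleton by
  skeleton, filling each face of Delta^n against its boundary. Then a is the value at the
  barycentre {[n]} and U z_j the value at the edge {{j}, [n]}.
*)

lemma is_poset_refl: "is_poset P le \<Longrightarrow> x \<in> P \<Longrightarrow> le x x"
  unfolding is_poset_def by blast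

lemma is_poset_trans: "is_poset P le \<Longrightarrow> x \<in> P \<Longrightarrow> y \<in> P \<Longrightarrow> z \<in> P \<Longrightarrow> le x y \<Longrightarrow> le y z \<Longrightarrow> le x z"
  unfolding is_poset_def by blast

lemma poset_map_in: "poset_map P leP Q leQ f \<Longrightarrow> x \<in> P \<Longrightarrow> f x \<in> Q"
  unfolding poset_map_def by blast

lemma poset_map_mono:
  "poset_map P leP Q leQ f \<Longrightarrow> x \<in> P \<Longrightarrow> y \<in> P \<Longrightarrow> leP x y \<Longrightarrow> leQ (f x) (f y)"
  unfolding poset_map_def by blast

lemma poset_map_subset: "poset_map P leP Q leQ f \<Longrightarrow> P' \<subseteq> P \<Longrightarrow> poset_map P' leP Q leQ f"
  unfolding poset_map_def by blast

lemma dim_le_oneD: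
  "dim_le_one P le \<Longrightarrow> x \<in> P \<Longrightarrow> y \<in> P \<Longrightarrow> z \<in> P \<Longrightarrow> le x y \<Longrightarrow> le y z \<Longrightarrow> x = y \<or> y = z"
  unfolding dim_le_one_def by blast

lemma dim_le_one_subset: "dim_le_one P le \<Longrightarrow> Q \<subseteq> P \<Longrightarrow> dim_le_one Q le"
  unfolding dim_le_one_def by blast

lemma dim_le_one_obtain_minimal:
  assumes "dim_le_one P le" and "P \<noteq> {}"
  obtains x where "x \<in> P" and "\<And>z. z \<in> P \<Longrightarrow> le z x \<Longrightarrow> z = x"
proof -
  obtain y where y: "y \<in> P" using assms(2) by blast
  show thesis
  proof (cases "\<exists>x\<in>P. le x y \<and> x \<noteq> y")
    case True
    then obtain x where "x \<in> P" "le x y" "x \<noteq> y" by blast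
    then show thesis using that dim_le_oneD[OF assms(1) _ _ y] by blast
  next
    case False
    then show thesis using that y by blast
  qed
qed

lemma poset_map_extend_at_minimal:
  assumes A: "is_poset A leA" and X: "dim_le_one X leX"
    and x: "x \<in> X" "\<And>z. z \<in> X \<Longrightarrow> leX z x \<Longrightarrow> z = x"
    and h: "poset_map (X - {x}) leX A leA h" and a: "a \<in> A"
    and U: "\<And>z. z \<in> X \<Longrightarrow> leX x z \<Longrightarrow> z \<noteq> x \<Longrightarrow> U z \<in> A \<and> leA (h z) (U z) \<and> leA a (U z)"
  shows "poset_map X leX A leA (\<lambda>z. if z = x then a else if leX x z then U z else h z)"
    (is "poset_map X leX A leA ?h")
  unfolding poset_map_def
proof (intro conjI ballI impI)
  fix z assume "z \<in> X"
  then show "?h z \<in> A" using a U poset_map_in[OF h] by auto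
next
  fix y z assume y: "y \<in> X" and z: "z \<in> X" and "leX y z"
  show "leA (?h y) (?h z)"
  proof (cases "y = x")
    case True
    then show ?thesis using z \<open>leX y z\<close> a U is_poset_refl[OF A] by auto
  next
    case False
    then have "z \<noteq> x" using x(2)[OF y] \<open>leX y z\<close> by blast
    have hyz: "leA (h y) (h z)" using poset_map_mono[OF h] y z \<open>y \<noteq> x\<close> \<open>z \<noteq> x\<close> \<open>leX y z\<close> by blast
    show ?thesis
    proof (cases "leX x z")
      case True
      have Uz: "U z \<in> A" "leA (h z) (U z)" using U[OF z True \<open>z \<noteq> x\<close>] by auto
      show ?thesis
      proof (cases "leX x y")
        case True
        then have "y = z" using dim_le_oneD[OF X x(1) y z _ \<open>leX y z\<close>] \<open>y \<noteq> x\<close> by blast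
        then show ?thesis using is_poset_refl[OF A Uz(1)] \<open>leX x z\<close> \<open>z \<noteq> x\<close> by simp
      next
        case False
        have "h y \<in> A" "h z \<in> A" using poset_map_in[OF h] y z \<open>y \<noteq> x\<close> \<open>z \<noteq> x\<close> by auto
        then have "leA (h y) (U z)" using is_poset_trans[OF A _ _ Uz(1) hyz Uz(2)] by blast
        then show ?thesis using False \<open>leX x z\<close> \<open>y \<noteq> x\<close> \<open>z \<noteq> x\<close> by simp
      qed
    next
      case False
      then have "\<not> leX x y"
        using dim_le_oneD[OF X x(1) y z _ \<open>leX y z\<close>] \<open>y \<noteq> x\<close> by blast
      then show ?thesis using False hyz \<open>y \<noteq> x\<close> \<open>z \<noteq> x\<close> by simp
    qed
  qed
qed

section \<open>Chains of faces of a simplex\<close>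

definition sd2_map :: "(nat \<Rightarrow> nat) \<Rightarrow> nat set set \<Rightarrow> nat set set" where
  "sd2_map f C = (\<lambda>S. f ` S) ` C"

definition coface :: "nat \<Rightarrow> nat \<Rightarrow> nat" where
  "coface i j = (if j < i then j else Suc j)"

text \<open>The chains of Sd^2 of the boundary of Delta^n are those that miss a vertex.\<close>

definition sd2_boundary :: "nat \<Rightarrow> nat set set set" where
  "sd2_boundary n = {C \<in> sd2 n. \<Union>C \<noteq> {..n}}"

lemma face_apply: "face m i x C = (if C \<in> sd2 m then x (sd2_map (coface i) C) else undefined)"
  by (simp add: face_def simp_op_def sd2_map_def coface_def)

lemma Union_sd2_map: "\<Union>(sd2_map f C) = f ` \<Union>C"
  by (auto simp: sd2_map_def)

lemma sd2_map_comp: "sd2_map f (sd2_map g C) = sd2_map (f \<circ> g) C"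
  by (simp add: sd2_map_def image_image image_comp)

lemma sd2_map_mono: "C \<subseteq> D \<Longrightarrow> sd2_map f C \<subseteq> sd2_map f D"
  by (auto simp: sd2_map_def)

lemma monotone_on_sd2_map: "monotone_on S (\<le>) (\<le>) (sd2_map f)"
  by (intro monotone_onI sd2_map_mono)

lemma sd2_map_cong: "(\<And>k. k \<in> \<Union>C \<Longrightarrow> f k = g k) \<Longrightarrow> sd2_map f C = sd2_map g C"
  unfolding sd2_map_def by (intro image_cong refl) auto

lemma Union_sd2_subset: "C \<in> sd2 n \<Longrightarrow> \<Union>C \<subseteq> {..n}"
  unfolding sd2_def sd1_def by blast

lemma Union_sd2_nonempty: "C \<in> sd2 n \<Longrightarrow> \<Union>C \<noteq> {}"
  unfolding sd2_def sd1_def by blast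

lemma finite_Union_sd2: "C \<in> sd2 n \<Longrightarrow> finite (\<Union>C)"
  using Union_sd2_subset finite_subset by blast

lemma card_Union_sd2_le:
  assumes "C \<in> sd2 n"
  shows "card (\<Union>C) \<le> Suc n"
proof -
  have "card (\<Union>C) \<le> card {..n}"
    by (rule card_mono[OF finite_atMost Union_sd2_subset[OF assms]])
  then show ?thesis by simp
qed

lemma sd2_card_Union_le_one:
  assumes "C \<in> sd2 n" and "card (\<Union>C) \<le> 1"
  obtains j where "j \<le> n" and "C = {{j}}"
proof -
  have "card (\<Union>C) \<noteq> 0"
    using Union_sd2_nonempty[OF assms(1)] finite_Union_sd2[OF assms(1)] by simp
  with assms(2) have "card (\<Union>C) = 1" by linarith
  then obtain j where j: "\<Union>C = {j}" by (rule card_1_singletonE)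
  have "S = {j}" if "S \<in> C" for S
  proof -
    have "S \<subseteq> {j}" using that j by blast
    moreover have "S \<noteq> {}" using assms(1) that unfolding sd2_def sd1_def by blast
    ultimately show ?thesis by (simp add: subset_singleton_iff)
  qed
  moreover have "C \<noteq> {}" using assms(1) unfolding sd2_def by blast
  ultimately have "C = {{j}}" by blast
  moreover have "j \<le> n" using Union_sd2_subset[OF assms(1)] j by blast
  ultimately show thesis using that by blast
qed

lemma sd2_vertex_le: "C \<in> sd2 n \<Longrightarrow> {j} \<in> C \<Longrightarrow> j \<le> n"
  unfolding sd2_def sd1_def by blast

lemma sd2_vertex_unique: "C \<in> sd2 n \<Longrightarrow> {i} \<in> C \<Longrightarrow> {j} \<in> C \<Longrightarrow> i = j"
  unfolding sd2_def by blast

lemma sd2_map_in_sd2: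
  assumes "C \<in> sd2 n" and "f ` \<Union>C \<subseteq> {..k}"
  shows "sd2_map f C \<in> sd2 k"
  unfolding sd2_def sd1_def sd2_map_def
proof (intro CollectI conjI ballI)
  show "(\<lambda>S. f ` S) ` C \<subseteq> {S. S \<subseteq> {..k} \<and> S \<noteq> {}}"
    using assms unfolding sd2_def sd1_def by blast
  show "(\<lambda>S. f ` S) ` C \<noteq> {}"
    using assms(1) unfolding sd2_def by blast
next
  fix S' T' assume "S' \<in> (\<lambda>S. f ` S) ` C" "T' \<in> (\<lambda>S. f ` S) ` C"
  then obtain S T where "S \<in> C" "T \<in> C" "S' = f ` S" "T' = f ` T" by blast
  moreover have "S \<subseteq> T \<or> T \<subseteq> S" using assms(1) \<open>S \<in> C\<close> \<open>T \<in> C\<close> unfolding sd2_def by blast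
  ultimately show "S' \<subseteq> T' \<or> T' \<subseteq> S'" by (meson image_mono)
qed

lemma sd2_boundary_subset: "sd2_boundary n \<subseteq> sd2 n"
  unfolding sd2_boundary_def by blast

lemma coface_commute: "i < j \<Longrightarrow> coface j \<circ> coface i = coface i \<circ> coface (j - 1)"
  by (auto simp: coface_def fun_eq_iff)

lemma sd2_map_coface_in_boundary:
  assumes "C \<in> sd2 m"
  shows "sd2_map (coface i) C \<in> sd2_boundary (Suc m)"
proof -
  have img: "coface i ` \<Union>C \<subseteq> {..Suc m} - {min i (Suc m)}"
    using Union_sd2_subset[OF assms] by (auto simp: coface_def)
  then have "sd2_map (coface i) C \<in> sd2 (Suc m)"
    by (intro sd2_map_in_sd2[OF assms]) blast
  moreover have "\<Union>(sd2_map (coface i) C) \<noteq> {..Suc m}"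
  proof
    assume "\<Union>(sd2_map (coface i) C) = {..Suc m}"
    then have "min i (Suc m) \<in> coface i ` \<Union>C" unfolding Union_sd2_map by simp
    then show False using img by blast
  qed
  ultimately show ?thesis
    unfolding sd2_boundary_def by blast
qed

lemma sd2_boundary_obtain_face:
  assumes "D \<in> sd2_boundary (Suc m)"
  obtains i D' where "i \<le> Suc m" and "D' \<in> sd2 m" and "D = sd2_map (coface i) D'"
proof -
  obtain i where i: "i \<le> Suc m" "i \<notin> \<Union>D"
    using assms Union_sd2_subset unfolding sd2_boundary_def by blast
  define codeg where "codeg k = (if k < i then k else k - 1)" for k
  have D: "D \<in> sd2 (Suc m)" using assms unfolding sd2_boundary_def by blast
  have "sd2_map codeg D \<in> sd2 m"
    by (rule sd2_map_in_sd2[OF D]) (use Union_sd2_subset[OF D] i in \<open>auto simp: codeg_def\<close>)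
  moreover have "sd2_map (coface i) (sd2_map codeg D) = sd2_map id D"
  proof (unfold sd2_map_comp, rule sd2_map_cong)
    fix k assume "k \<in> \<Union>D"
    then have "k \<noteq> i" using i(2) by blast
    then show "(coface i \<circ> codeg) k = id k" by (auto simp: coface_def codeg_def)
  qed
  ultimately show thesis
    using that[OF i(1)] by (simp add: sd2_map_def)
qed

lemma sd2_face_iso:
  assumes \<sigma>: "\<sigma> \<subseteq> {..n}" "card \<sigma> = Suc k"
  obtains th ti where
    "\<And>C. C \<in> sd2 k \<Longrightarrow> sd2_map th C \<in> sd2 n \<and> \<Union>(sd2_map th C) \<subseteq> \<sigma>"
    "\<And>C. C \<in> sd2_boundary k \<Longrightarrow> \<Union>(sd2_map th C) \<subset> \<sigma>"
    "\<And>C. C \<in> sd2 n \<Longrightarrow> \<Union>C \<subseteq> \<sigma> \<Longrightarrow> sd2_map ti C \<in> sd2 k \<and> sd2_map th (sd2_map ti C) = C"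
    "\<And>C. C \<in> sd2 n \<Longrightarrow> \<Union>C \<subset> \<sigma> \<Longrightarrow> sd2_map ti C \<in> sd2_boundary k"
proof -
  have "finite \<sigma>" using \<sigma>(1) finite_subset by blast
  then obtain th where "bij_betw th {..<Suc k} \<sigma>"
    using ex_bij_betw_nat_finite \<sigma>(2) by (metis atLeast0LessThan)
  then have th: "inj_on th {..k}" "th ` {..k} = \<sigma>"
    by (simp_all add: lessThan_Suc_atMost bij_betw_def)
  define ti where "ti = inv_into {..k} th"
  have th_sd2: "sd2_map th C \<in> sd2 n \<and> \<Union>(sd2_map th C) \<subseteq> \<sigma>" if "C \<in> sd2 k" for C
  proof -
    have "\<Union>(sd2_map th C) \<subseteq> \<sigma>"
      using Union_sd2_subset[OF that] th(2) unfolding Union_sd2_map by blast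
    moreover from this have "sd2_map th C \<in> sd2 n"
      using \<sigma>(1) unfolding Union_sd2_map by (intro sd2_map_in_sd2[OF that]) blast
    ultimately show ?thesis by blast
  qed
  have th_boundary: "\<Union>(sd2_map th C) \<subset> \<sigma>" if "C \<in> sd2_boundary k" for C
  proof -
    have sub: "\<Union>C \<subseteq> {..k}" and ne: "\<Union>C \<noteq> {..k}"
      using that Union_sd2_subset unfolding sd2_boundary_def by auto
    then have "th ` \<Union>C \<noteq> th ` {..k}"
      using th(1) by (metis inj_on_image_eq_iff order_refl)
    then show ?thesis
      using sub th(2) unfolding Union_sd2_map by blast
  qed
  have ti_sd2: "sd2_map ti C \<in> sd2 k \<and> sd2_map th (sd2_map ti C) = C"
    if "C \<in> sd2 n" "\<Union>C \<subseteq> \<sigma>" for C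
  proof
    have "ti ` \<Union>C \<subseteq> {..k}"
      using that(2) th(2) inv_into_into[of _ th "{..k}"] unfolding ti_def by blast
    then show "sd2_map ti C \<in> sd2 k"
      by (rule sd2_map_in_sd2[OF that(1)])
    have "sd2_map th (sd2_map ti C) = sd2_map id C"
      unfolding sd2_map_comp using that(2) th(2)
      by (intro sd2_map_cong) (auto simp: ti_def f_inv_into_f)
    then show "sd2_map th (sd2_map ti C) = C" by (simp add: sd2_map_def)
  qed
  have ti_boundary: "sd2_map ti C \<in> sd2_boundary k" if "C \<in> sd2 n" "\<Union>C \<subset> \<sigma>" for C
  proof -
    have "\<Union>(sd2_map ti C) \<noteq> {..k}"
    proof
      assume "\<Union>(sd2_map ti C) = {..k}"
      then have "\<Union>C = \<sigma>"
        using ti_sd2[of C] that th(2) by (metis Union_sd2_map psubset_imp_subset)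
      then show False using that(2) by blast
    qed
    then show ?thesis
      using ti_sd2[of C] that unfolding sd2_boundary_def by blast
  qed
  show thesis
    using that th_sd2 th_boundary ti_sd2 ti_boundary by blast
qed

definition sd2_cone :: "'b \<Rightarrow> (nat \<Rightarrow> 'b) \<Rightarrow> nat set set \<Rightarrow> 'b" where
  "sd2_cone b c C = (if \<exists>j. {j} \<in> C then c (THE j. {j} \<in> C) else b)"

lemma sd2_cone_vertex:
  assumes "C \<in> sd2 n" and "{j} \<in> C"
  shows "sd2_cone b c C = c j"
proof -
  have "(THE i. {i} \<in> C) = j"
    using sd2_vertex_unique[OF assms(1) _ assms(2)] assms(2) by (intro the_equality)
  then show ?thesis using assms(2) unfolding sd2_cone_def by auto
qed

lemma sd2_cone_apex: "(\<And>j. {j} \<notin> C) \<Longrightarrow> sd2_cone b c C = b"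
  unfolding sd2_cone_def by simp

lemma sd2_cone_in_monotone:
  assumes B: "is_poset B leB" and b: "b \<in> B"
    and c: "\<And>j. j \<le> n \<Longrightarrow> c j \<in> B" "\<And>j. j \<le> n \<Longrightarrow> leB b (c j)"
  shows "sd2_cone b c ` sd2 n \<subseteq> B" and "monotone_on (sd2 n) (\<le>) leB (sd2_cone b c)"
proof -
  show "sd2_cone b c ` sd2 n \<subseteq> B"
  proof (rule image_subsetI)
    fix C assume C: "C \<in> sd2 n"
    show "sd2_cone b c C \<in> B"
    proof (cases "\<exists>j. {j} \<in> C")
      case True
      then obtain j where "{j} \<in> C" by blast
      then show ?thesis
        using sd2_cone_vertex[OF C \<open>{j} \<in> C\<close>, of b c] c(1)[OF sd2_vertex_le[OF C \<open>{j} \<in> C\<close>]] by simp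
    next
      case False
      then show ?thesis using sd2_cone_apex[of C b c] b by auto
    qed
  qed
  show "monotone_on (sd2 n) (\<le>) leB (sd2_cone b c)"
  proof (rule monotone_onI)
    fix C D assume C: "C \<in> sd2 n" and D: "D \<in> sd2 n" and "C \<le> D"
    show "leB (sd2_cone b c C) (sd2_cone b c D)"
    proof (cases "\<exists>j. {j} \<in> C")
      case True
      then obtain j where "{j} \<in> C" by blast
      moreover from this have "{j} \<in> D" using \<open>C \<le> D\<close> by blast
      ultimately show ?thesis
        using sd2_cone_vertex[OF C \<open>{j} \<in> C\<close>, of b c] sd2_cone_vertex[OF D \<open>{j} \<in> D\<close>, of b c]
          is_poset_refl[OF B c(1)[OF sd2_vertex_le[OF C \<open>{j} \<in> C\<close>]]] by simp
    next
      case False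
      then have "sd2_cone b c C = b" by (intro sd2_cone_apex) blast
      moreover have "leB b (sd2_cone b c D)"
      proof (cases "\<exists>j. {j} \<in> D")
        case True
        then obtain j where "{j} \<in> D" by blast
        then show ?thesis
          using sd2_cone_vertex[OF D \<open>{j} \<in> D\<close>, of b c] c(2)[OF sd2_vertex_le[OF D \<open>{j} \<in> D\<close>]] by simp
      next
        case False
        then show ?thesis using sd2_cone_apex[of D b c] is_poset_refl[OF B b] by auto
      qed
      ultimately show ?thesis by simp
    qed
  qed
qed

definition lift_on :: "'c::order set \<Rightarrow> 'a set \<Rightarrow> ('a \<Rightarrow> 'a \<Rightarrow> bool) \<Rightarrow> ('a \<Rightarrow> 'b)
    \<Rightarrow> ('c \<Rightarrow> 'b) \<Rightarrow> ('c \<Rightarrow> 'a) \<Rightarrow> bool" where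
  "lift_on S A leA p G H \<longleftrightarrow> (\<forall>C\<in>S. H C \<in> A \<and> p (H C) = G C) \<and> monotone_on S (\<le>) leA H"

lemma lift_onI:
  assumes "\<And>C. C \<in> S \<Longrightarrow> H C \<in> A \<and> p (H C) = G C"
    and "\<And>C D. C \<in> S \<Longrightarrow> D \<in> S \<Longrightarrow> C \<le> D \<Longrightarrow> leA (H C) (H D)"
  shows "lift_on S A leA p G H"
  using assms unfolding lift_on_def by (blast intro: monotone_onI)

lemma lift_onD:
  assumes "lift_on S A leA p G H" and "C \<in> S"
  shows "H C \<in> A" and "p (H C) = G C"
  using assms unfolding lift_on_def by auto

lemma lift_on_monoD:
  "lift_on S A leA p G H \<Longrightarrow> C \<in> S \<Longrightarrow> D \<in> S \<Longrightarrow> C \<le> D \<Longrightarrow> leA (H C) (H D)"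
  unfolding lift_on_def monotone_on_def by blast

lemma lift_on_subset: "lift_on S A leA p G H \<Longrightarrow> T \<subseteq> S \<Longrightarrow> lift_on T A leA p G H"
  unfolding lift_on_def by (meson monotone_on_subset subsetD)

lemma lift_on_comp:
  assumes "lift_on S A leA p G H" and "f ` T \<subseteq> S" and "monotone_on T (\<le>) (\<le>) f"
    and "\<And>C. C \<in> T \<Longrightarrow> G' C = G (f C)"
  shows "lift_on T A leA p G' (H \<circ> f)"
  using assms unfolding lift_on_def monotone_on_def by (auto simp: image_subset_iff)

lemma lift_on_skeleton_glue:
  assumes H: "lift_on {C \<in> sd2 n. card (\<Union>C) \<le> d} A leA p G H"
    and K: "\<And>\<sigma>. \<sigma> \<subseteq> {..n} \<Longrightarrow> card \<sigma> = Suc d \<Longrightarrow> lift_on {C \<in> sd2 n. \<Union>C \<subseteq> \<sigma>} A leA p G (K \<sigma>)"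
    and K_H: "\<And>\<sigma> C. \<sigma> \<subseteq> {..n} \<Longrightarrow> card \<sigma> = Suc d \<Longrightarrow> C \<in> sd2 n \<Longrightarrow> \<Union>C \<subset> \<sigma> \<Longrightarrow> K \<sigma> C = H C"
  shows "lift_on {C \<in> sd2 n. card (\<Union>C) \<le> Suc d} A leA p G
    (\<lambda>C. if card (\<Union>C) = Suc d then K (\<Union>C) C else H C)" (is "lift_on _ A leA p G ?H")
proof -
  have H'_K: "?H C = K \<sigma> C" if \<sigma>: "\<sigma> \<subseteq> {..n}" "card \<sigma> = Suc d" and C: "C \<in> sd2 n" "\<Union>C \<subseteq> \<sigma>" for \<sigma> C
  proof (cases "\<Union>C = \<sigma>")
    case True
    then show ?thesis using \<sigma>(2) by simp
  next
    case False
    then have "\<Union>C \<subset> \<sigma>" using C(2) by blast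
    then have "card (\<Union>C) < Suc d"
      using psubset_card_mono[OF finite_subset[OF \<sigma>(1) finite_atMost]] \<sigma>(2) by metis
    then show ?thesis using K_H[OF \<sigma> C(1) \<open>\<Union>C \<subset> \<sigma>\<close>] by simp
  qed
  show ?thesis
  proof (rule lift_onI)
    fix C assume C: "C \<in> {C \<in> sd2 n. card (\<Union>C) \<le> Suc d}"
    show "?H C \<in> A \<and> p (?H C) = G C"
    proof (cases "card (\<Union>C) = Suc d")
      case True
      note face = Union_sd2_subset True
      show ?thesis using C lift_onD[OF K[OF face]] H'_K[OF face] by auto
    next
      case False
      then show ?thesis using C lift_onD[OF H] by auto
    qed
  next
    fix C D assume C: "C \<in> {C \<in> sd2 n. card (\<Union>C) \<le> Suc d}"
      and D: "D \<in> {C \<in> sd2 n. card (\<Union>C) \<le> Suc d}" and "C \<le> D"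
    then have CD: "\<Union>C \<subseteq> \<Union>D" by blast
    show "leA (?H C) (?H D)"
    proof (cases "card (\<Union>D) = Suc d")
      case True
      note face = Union_sd2_subset True
      show ?thesis
        using C D CD \<open>C \<le> D\<close> lift_on_monoD[OF K[OF face]] H'_K[OF face] by auto
    next
      case False
      moreover have "card (\<Union>C) \<le> card (\<Union>D)"
        using card_mono[OF finite_Union_sd2 CD] D by blast
      ultimately show ?thesis
        using C D \<open>C \<le> D\<close> lift_on_monoD[OF H] by auto
    qed
  qed
qed

lemma ex2N_lift_on:
  assumes "z \<in> ex2N A leA n" and "ex2N_map p n z = G'" and "\<And>C. C \<in> sd2 n \<Longrightarrow> G' C = G C"
  shows "lift_on (sd2 n) A leA p G z"
  using assms unfolding lift_on_def monotone_on_def ex2N_def ex2N_map_def by auto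

lemma acyclic_fibration_surj:
  assumes "acyclic_fibration A leA B leB f" and "is_poset B leB" and "b \<in> B"
  obtains a where "a \<in> A" and "f a = b"
proof -
  define y where "y C = (if C \<in> sd2 0 then b else undefined)" for C :: "nat set set"
  have "y \<in> ex2N B leB 0"
    using assms(2,3) is_poset_refl unfolding ex2N_def y_def by auto
  then obtain z where z: "z \<in> ex2N A leA 0" and z_lifts: "ex2N_map f 0 z = y"
    using assms(1) unfolding acyclic_fibration_def by blast
  have vertex: "{{0}} \<in> sd2 0" unfolding sd2_def sd1_def by auto
  show thesis
  proof
    show "z {{0}} \<in> A" using z vertex unfolding ex2N_def by blast
    show "f (z {{0}}) = b" using fun_cong[OF z_lifts, of "{{0}}"] vertex by (simp add: ex2N_map_def y_def)
  qed
qed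

lemma acyclic_fibration_fill:
  assumes "acyclic_fibration A leA B leB f"
    and "\<And>i. i \<le> Suc m \<Longrightarrow> xs i \<in> ex2N A leA m"
    and "\<And>i j. i < j \<Longrightarrow> j \<le> Suc m \<Longrightarrow> 0 < m \<Longrightarrow> face (m - 1) i (xs j) = face (m - 1) (j - 1) (xs i)"
    and "y \<in> ex2N B leB (Suc m)"
    and "\<And>i. i \<le> Suc m \<Longrightarrow> face m i y = ex2N_map f m (xs i)"
  obtains z where "z \<in> ex2N A leA (Suc m)" and "\<And>i. i \<le> Suc m \<Longrightarrow> face m i z = xs i"
    and "ex2N_map f (Suc m) z = y"
proof -
  have "\<exists>z\<in>ex2N A leA (Suc m). (\<forall>i\<le>Suc m. face m i z = xs i) \<and> ex2N_map f (Suc m) z = y"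
    using assms(1) unfolding acyclic_fibration_def
  proof (elim conjE allE impE)
    show "(\<forall>i\<le>Suc m. xs i \<in> ex2N A leA m) \<and>
      (\<forall>i j. i < j \<and> j \<le> Suc m \<and> 0 < m \<longrightarrow> face (m - 1) i (xs j) = face (m - 1) (j - 1) (xs i)) \<and>
      y \<in> ex2N B leB (Suc m) \<and> (\<forall>i\<le>Suc m. face m i y = ex2N_map f m (xs i))"
      using assms(2-5) by blast
  qed
  then show thesis using that by blast
qed

section \<open>Lifting through an acyclic fibration of posets\<close>

locale poset_acyclic_fibration =
  fixes A :: "'a set" and leA :: "'a \<Rightarrow> 'a \<Rightarrow> bool"
    and B :: "'b set" and leB :: "'b \<Rightarrow> 'b \<Rightarrow> bool"
    and p :: "'a \<Rightarrow> 'b"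
  assumes poset_A: "is_poset A leA" and poset_B: "is_poset B leB"
    and map_p: "poset_map A leA B leB p" and acyclic: "acyclic_fibration A leA B leB p"
begin

lemma lift_simplex_rel_boundary:
  assumes G: "G ` sd2 (Suc m) \<subseteq> B" "monotone_on (sd2 (Suc m)) (\<le>) leB G"
    and H: "lift_on (sd2_boundary (Suc m)) A leA p G H"
  obtains K where "lift_on (sd2 (Suc m)) A leA p G K" and "\<And>C. C \<in> sd2_boundary (Suc m) \<Longrightarrow> K C = H C"
proof -
  \<comment> \<open>the faces of the map from the boundary of Delta^(m+1) to Ex^2 N A given by H\<close>
  define xs where "xs i C = (if C \<in> sd2 m then H (sd2_map (coface i) C) else undefined)" for i C
  define y where "y C = (if C \<in> sd2 (Suc m) then G C else undefined)" for C
  have boundary: "sd2_map (coface i) C \<in> sd2_boundary (Suc m)" if "C \<in> sd2 m" for i C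
    using sd2_map_coface_in_boundary[OF that] .
  have xs: "xs i \<in> ex2N A leA m" for i
    unfolding ex2N_def xs_def
    using lift_onD[OF H boundary] lift_on_monoD[OF H boundary boundary sd2_map_mono] by auto
  have xs_faces: "face (m - 1) i (xs j) = face (m - 1) (j - 1) (xs i)" if "i < j" "0 < m" for i j
  proof
    fix C
    have "Suc (m - 1) = m" using that(2) by simp
    then have "sd2_map (coface k) C \<in> sd2 m" if "C \<in> sd2 (m - 1)" for k
      using sd2_map_coface_in_boundary[OF that, of k] unfolding sd2_boundary_def by simp
    moreover have "sd2_map (coface j) (sd2_map (coface i) C) = sd2_map (coface i) (sd2_map (coface (j - 1)) C)"
      by (simp add: sd2_map_comp coface_commute[OF that(1)])
    ultimately show "face (m - 1) i (xs j) C = face (m - 1) (j - 1) (xs i) C"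
      by (simp add: face_apply xs_def)
  qed
  have y: "y \<in> ex2N B leB (Suc m)"
    using G unfolding ex2N_def y_def monotone_on_def by auto
  have y_faces: "face m i y = ex2N_map p m (xs i)" for i
  proof
    fix C
    show "face m i y C = ex2N_map p m (xs i) C"
      using boundary[of C i] lift_onD(2)[OF H boundary[of C i]]
      by (simp add: face_apply ex2N_map_def xs_def y_def sd2_boundary_def)
  qed
  obtain z where z: "z \<in> ex2N A leA (Suc m)" and z_faces: "\<And>i. i \<le> Suc m \<Longrightarrow> face m i z = xs i"
    and z_lifts: "ex2N_map p (Suc m) z = y"
    using acyclic_fibration_fill[OF acyclic xs xs_faces y y_faces] by blast
  have "z D = H D" if D: "D \<in> sd2_boundary (Suc m)" for D
  proof -
    obtain i D' where "i \<le> Suc m" "D' \<in> sd2 m" "D = sd2_map (coface i) D'"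
      using sd2_boundary_obtain_face[OF D] .
    then show ?thesis
      using fun_cong[OF z_faces, of i D'] by (simp add: face_apply xs_def)
  qed
  moreover have "lift_on (sd2 (Suc m)) A leA p G z"
    using ex2N_lift_on[OF z z_lifts] by (simp add: y_def)
  ultimately show thesis using that by blast
qed

lemma lift_face_rel_boundary:
  assumes G: "G ` sd2 n \<subseteq> B" "monotone_on (sd2 n) (\<le>) leB G"
    and \<sigma>: "\<sigma> \<subseteq> {..n}" "card \<sigma> = Suc (Suc m)"
    and H: "lift_on {C \<in> sd2 n. \<Union>C \<subset> \<sigma>} A leA p G H"
  obtains K where "lift_on {C \<in> sd2 n. \<Union>C \<subseteq> \<sigma>} A leA p G K"
    and "\<And>C. C \<in> sd2 n \<Longrightarrow> \<Union>C \<subset> \<sigma> \<Longrightarrow> K C = H C"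
proof -
  obtain th ti where
    th_sd2: "\<And>C. C \<in> sd2 (Suc m) \<Longrightarrow> sd2_map th C \<in> sd2 n \<and> \<Union>(sd2_map th C) \<subseteq> \<sigma>" and
    th_boundary: "\<And>C. C \<in> sd2_boundary (Suc m) \<Longrightarrow> \<Union>(sd2_map th C) \<subset> \<sigma>" and
    ti_sd2: "\<And>C. C \<in> sd2 n \<Longrightarrow> \<Union>C \<subseteq> \<sigma> \<Longrightarrow> sd2_map ti C \<in> sd2 (Suc m) \<and> sd2_map th (sd2_map ti C) = C" and
    ti_boundary: "\<And>C. C \<in> sd2 n \<Longrightarrow> \<Union>C \<subset> \<sigma> \<Longrightarrow> sd2_map ti C \<in> sd2_boundary (Suc m)"
    using sd2_face_iso[OF \<sigma>] by blast
  have boundary_image: "sd2_map th ` sd2_boundary (Suc m) \<subseteq> {C \<in> sd2 n. \<Union>C \<subset> \<sigma>}"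
    using th_sd2 th_boundary sd2_boundary_subset by blast
  have "(G \<circ> sd2_map th) ` sd2 (Suc m) \<subseteq> B"
    using G(1) th_sd2 by auto
  moreover have "monotone_on (sd2 (Suc m)) (\<le>) leB (G \<circ> sd2_map th)"
    using th_sd2 by (intro monotone_on_o[OF G(2) monotone_on_sd2_map]) auto
  moreover have "lift_on (sd2_boundary (Suc m)) A leA p (G \<circ> sd2_map th) (H \<circ> sd2_map th)"
    by (rule lift_on_comp[OF H boundary_image monotone_on_sd2_map]) simp
  ultimately obtain K where K: "lift_on (sd2 (Suc m)) A leA p (G \<circ> sd2_map th) K"
    and K_boundary: "\<And>C. C \<in> sd2_boundary (Suc m) \<Longrightarrow> K C = (H \<circ> sd2_map th) C"
    by (rule lift_simplex_rel_boundary) blast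
  show thesis
  proof
    show "lift_on {C \<in> sd2 n. \<Union>C \<subseteq> \<sigma>} A leA p G (K \<circ> sd2_map ti)"
      using ti_sd2 by (intro lift_on_comp[OF K _ monotone_on_sd2_map]) auto
    show "(K \<circ> sd2_map ti) C = H C" if "C \<in> sd2 n" "\<Union>C \<subset> \<sigma>" for C
      using K_boundary[OF ti_boundary[OF that]] ti_sd2[of C] that by auto
  qed
qed

lemma lift_skeleton_step:
  assumes G: "G ` sd2 n \<subseteq> B" "monotone_on (sd2 n) (\<le>) leB G"
    and H: "lift_on {C \<in> sd2 n. card (\<Union>C) \<le> Suc m} A leA p G H"
  obtains H' where "lift_on {C \<in> sd2 n. card (\<Union>C) \<le> Suc (Suc m)} A leA p G H'"
    and "\<And>C. C \<in> sd2 n \<Longrightarrow> card (\<Union>C) \<le> Suc m \<Longrightarrow> H' C = H C"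
proof -
  define faces where "faces = {\<sigma>. \<sigma> \<subseteq> {..n} \<and> card \<sigma> = Suc (Suc m)}"
  have "\<forall>\<sigma>\<in>faces. \<exists>K. lift_on {C \<in> sd2 n. \<Union>C \<subseteq> \<sigma>} A leA p G K \<and> (\<forall>C\<in>sd2 n. \<Union>C \<subset> \<sigma> \<longrightarrow> K C = H C)"
  proof
    fix \<sigma> assume "\<sigma> \<in> faces"
    then have \<sigma>: "\<sigma> \<subseteq> {..n}" "card \<sigma> = Suc (Suc m)" unfolding faces_def by auto
    have "card (\<Union>C) \<le> Suc m" if "\<Union>C \<subset> \<sigma>" for C
      using psubset_card_mono[OF finite_subset[OF \<sigma>(1) finite_atMost] that] \<sigma>(2) by simp
    then have "{C \<in> sd2 n. \<Union>C \<subset> \<sigma>} \<subseteq> {C \<in> sd2 n. card (\<Union>C) \<le> Suc m}" by blast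
    then obtain K where "lift_on {C \<in> sd2 n. \<Union>C \<subseteq> \<sigma>} A leA p G K"
      and "\<And>C. C \<in> sd2 n \<Longrightarrow> \<Union>C \<subset> \<sigma> \<Longrightarrow> K C = H C"
      using lift_face_rel_boundary[OF G \<sigma> lift_on_subset[OF H]] by blast
    then show "\<exists>K. lift_on {C \<in> sd2 n. \<Union>C \<subseteq> \<sigma>} A leA p G K \<and> (\<forall>C\<in>sd2 n. \<Union>C \<subset> \<sigma> \<longrightarrow> K C = H C)"
      by blast
  qed
  from bchoice[OF this] obtain K where
    K: "\<forall>\<sigma>\<in>faces. lift_on {C \<in> sd2 n. \<Union>C \<subseteq> \<sigma>} A leA p G (K \<sigma>) \<and> (\<forall>C\<in>sd2 n. \<Union>C \<subset> \<sigma> \<longrightarrow> K \<sigma> C = H C)" ..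
  have "lift_on {C \<in> sd2 n. card (\<Union>C) \<le> Suc (Suc m)} A leA p G
      (\<lambda>C. if card (\<Union>C) = Suc (Suc m) then K (\<Union>C) C else H C)"
    by (rule lift_on_skeleton_glue[OF H]) (use K in \<open>auto simp: faces_def\<close>)
  then show thesis by (rule that) auto
qed

lemma lift_sd2_rel_vertices:
  assumes G: "G ` sd2 n \<subseteq> B" "monotone_on (sd2 n) (\<le>) leB G"
    and a: "\<And>j. j \<le> n \<Longrightarrow> a j \<in> A" "\<And>j. j \<le> n \<Longrightarrow> p (a j) = G {{j}}"
  obtains H where "lift_on (sd2 n) A leA p G H" and "\<And>j. j \<le> n \<Longrightarrow> H {{j}} = a j"
proof -
  have "\<exists>H. lift_on {C \<in> sd2 n. card (\<Union>C) \<le> Suc d} A leA p G H \<and> (\<forall>j\<le>n. H {{j}} = a j)" for d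
  proof (induction d)
    case 0
    have "lift_on {C \<in> sd2 n. card (\<Union>C) \<le> 1} A leA p G (\<lambda>C. a (the_elem (\<Union>C)))"
    proof (rule lift_onI)
      fix C assume "C \<in> {C \<in> sd2 n. card (\<Union>C) \<le> 1}"
      then obtain j where "j \<le> n" "C = {{j}}" using sd2_card_Union_le_one by blast
      then show "a (the_elem (\<Union>C)) \<in> A \<and> p (a (the_elem (\<Union>C))) = G C" using a by simp
    next
      fix C D assume "C \<in> {C \<in> sd2 n. card (\<Union>C) \<le> 1}" "D \<in> {C \<in> sd2 n. card (\<Union>C) \<le> 1}" "C \<le> D"
      moreover from this obtain j where "j \<le> n" "D = {{j}}" using sd2_card_Union_le_one by blast
      ultimately have "C = D" using Union_sd2_nonempty by fastforce
      then show "leA (a (the_elem (\<Union>C))) (a (the_elem (\<Union>D)))"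
        using a(1) \<open>j \<le> n\<close> \<open>D = {{j}}\<close> is_poset_refl[OF poset_A] by simp
    qed
    then show ?case by fastforce
  next
    case (Suc d)
    then obtain H where H: "lift_on {C \<in> sd2 n. card (\<Union>C) \<le> Suc d} A leA p G H"
      and vertices: "\<forall>j\<le>n. H {{j}} = a j" by blast
    obtain H' where "lift_on {C \<in> sd2 n. card (\<Union>C) \<le> Suc (Suc d)} A leA p G H'"
      and "\<And>C. C \<in> sd2 n \<Longrightarrow> card (\<Union>C) \<le> Suc d \<Longrightarrow> H' C = H C"
      using lift_skeleton_step[OF G H] by blast
    moreover have "{{j}} \<in> sd2 n" if "j \<le> n" for j
      using that unfolding sd2_def sd1_def by auto
    ultimately show ?case using vertices by auto
  qed
  moreover have "{C \<in> sd2 n. card (\<Union>C) \<le> Suc n} = sd2 n"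
    using card_Union_sd2_le by blast
  ultimately show thesis using that by metis
qed

lemma lift_below_vertices:
  fixes w :: "nat \<Rightarrow> 'a"
  assumes "1 \<le> n" and w: "\<And>j. j \<le> n \<Longrightarrow> w j \<in> A" and b: "b \<in> B"
    and below: "\<And>j. j \<le> n \<Longrightarrow> leB b (p (w j))"
  obtains a U where "a \<in> A" and "p a = b"
    and "\<And>j. j \<le> n \<Longrightarrow> U j \<in> A \<and> p (U j) = p (w j) \<and> leA (w j) (U j) \<and> leA a (U j)"
proof -
  let ?G = "sd2_cone b (p \<circ> w)"
  have vertex: "{{j}} \<in> sd2 n" and edge: "{{j}, {..n}} \<in> sd2 n" if "j \<le> n" for j
    using that unfolding sd2_def sd1_def by auto
  have top: "{{..n}} \<in> sd2 n"
    unfolding sd2_def sd1_def by auto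
  have c: "(p \<circ> w) j \<in> B" "leB b ((p \<circ> w) j)" if "j \<le> n" for j
    using poset_map_in[OF map_p w[OF that]] below[OF that] by simp_all
  have w_lifts: "p (w j) = ?G {{j}}" if "j \<le> n" for j
    using sd2_cone_vertex[OF vertex[OF that], of j b "p \<circ> w"] by simp
  obtain H where H: "lift_on (sd2 n) A leA p ?G H" and H_vertex: "\<And>j. j \<le> n \<Longrightarrow> H {{j}} = w j"
    using lift_sd2_rel_vertices[OF sd2_cone_in_monotone[OF poset_B b c] w w_lifts] by blast
  have "{j} \<noteq> {..n}" for j
  proof
    assume "{j} = {..n}"
    then have "0 \<in> {j}" "1 \<in> {j}" using \<open>1 \<le> n\<close> by auto
    then show False by simp
  qed
  then have G_top: "?G {{..n}} = b" using sd2_cone_apex[of "{{..n}}" b "p \<circ> w"] by auto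
  show thesis
  proof (rule that)
    show "H {{..n}} \<in> A" "p (H {{..n}}) = b"
      using lift_onD[OF H top] G_top by auto
    fix j assume j: "j \<le> n"
    show "H {{j}, {..n}} \<in> A \<and> p (H {{j}, {..n}}) = p (w j) \<and> leA (w j) (H {{j}, {..n}})
        \<and> leA (H {{..n}}) (H {{j}, {..n}})"
      using lift_onD[OF H edge[OF j]] sd2_cone_vertex[OF edge[OF j], of j b "p \<circ> w"] lift_on_monoD[OF H vertex[OF j] edge[OF j]]
        lift_on_monoD[OF H top edge[OF j]] H_vertex[OF j] by auto
  qed
qed

lemma lift_below_finite:
  assumes W: "finite W" "W \<subseteq> A" and b: "b \<in> B" and below: "\<And>w. w \<in> W \<Longrightarrow> leB b (p w)"
  obtains a where "a \<in> A" and "p a = b" and "\<And>w. w \<in> W \<Longrightarrow> \<exists>u\<in>A. p u = p w \<and> leA w u \<and> leA a u"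
proof (cases "W = {}")
  case True
  then show thesis using acyclic_fibration_surj[OF acyclic poset_B b] that by blast
next
  case False
  obtain ws where ws: "set ws = W" using finite_list[OF W(1)] by blast
  define n where "n = length ws"
  have "1 \<le> n" using False ws unfolding n_def by (cases ws) auto
  \<comment> \<open>repeating the last element makes the barycentre {..n} differ from every vertex\<close>
  define w where "w j = ws ! min j (n - 1)" for j
  have w: "w j \<in> W" for j
  proof -
    have "min j (n - 1) < length ws" using \<open>1 \<le> n\<close> unfolding n_def by linarith
    then show ?thesis using ws unfolding w_def by auto
  qed
  obtain a U where a: "a \<in> A" "p a = b"
    and U: "\<And>j. j \<le> n \<Longrightarrow> U j \<in> A \<and> p (U j) = p (w j) \<and> leA (w j) (U j) \<and> leA a (U j)"
    using lift_below_vertices[OF \<open>1 \<le> n\<close>, of w b] w W(2) b below by blast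
  show thesis
  proof (rule that[OF a])
    fix v assume "v \<in> W"
    then obtain j where "j < n" "ws ! j = v" using ws unfolding n_def by (metis in_set_conv_nth)
    then have "w j = v" unfolding w_def by simp
    then show "\<exists>u\<in>A. p u = p v \<and> leA v u \<and> leA a u" using U[of j] \<open>j < n\<close> by auto
  qed
qed

lemma lifts_against_dim_le_one:
  assumes "finite X" and "dim_le_one X leX"
  shows "lifts_against X leX A leA B leB p"
  using assms
proof (induction X rule: finite_psubset_induct)
  case (psubset X)
  show ?case
  proof (cases "X = {}")
    case True
    then show ?thesis by (simp add: lifts_against_def poset_map_def)
  next
    case False
    obtain x where x: "x \<in> X" "\<And>z. z \<in> X \<Longrightarrow> leX z x \<Longrightarrow> z = x"
      using dim_le_one_obtain_minimal[OF psubset.prems False] by blast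
    have IH: "lifts_against (X - {x}) leX A leA B leB p"
      using psubset.IH[of "X - {x}"] x(1) dim_le_one_subset[OF psubset.prems] by blast
    show ?thesis
      unfolding lifts_against_def
    proof (intro allI impI)
      fix g assume g: "poset_map X leX B leB g"
      obtain h where h: "poset_map (X - {x}) leX A leA h" and hg: "\<And>z. z \<in> X - {x} \<Longrightarrow> p (h z) = g z"
        using IH poset_map_subset[OF g, of "X - {x}"] unfolding lifts_against_def by blast
      define J where "J = {z \<in> X. leX x z \<and> z \<noteq> x}"
      have "finite (h ` J)" using psubset.hyps unfolding J_def by simp
      moreover have "h ` J \<subseteq> A" using poset_map_in[OF h] unfolding J_def by auto
      moreover have "leB (g x) (p v)" if "v \<in> h ` J" for v
        using that poset_map_mono[OF g x(1)] hg unfolding J_def by auto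
      ultimately obtain a where a: "a \<in> A" "p a = g x"
        and above: "\<And>v. v \<in> h ` J \<Longrightarrow> \<exists>u\<in>A. p u = p v \<and> leA v u \<and> leA a u"
        using lift_below_finite poset_map_in[OF g x(1)] by metis
      have "\<exists>u. u \<in> A \<and> p u = p (h z) \<and> leA (h z) u \<and> leA a u" if "z \<in> J" for z
        using above[of "h z"] that by blast
      then obtain U where U: "\<And>z. z \<in> J \<Longrightarrow> U z \<in> A \<and> p (U z) = p (h z) \<and> leA (h z) (U z) \<and> leA a (U z)"
        by metis
      let ?h = "\<lambda>z. if z = x then a else if leX x z then U z else h z"
      have "poset_map X leX A leA ?h"
        using U unfolding J_def by (intro poset_map_extend_at_minimal[OF poset_A psubset.prems x h a(1)]) auto
      moreover have "p (?h z) = g z" if "z \<in> X" for z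
        using that a U hg unfolding J_def by auto
      ultimately show "\<exists>h. poset_map X leX A leA h \<and> (\<forall>z\<in>X. p (h z) = g z)" by blast
    qed
  qed
qed

end

theorem proposition6p4:
  fixes X :: "'x set" and leX :: "'x \<Rightarrow> 'x \<Rightarrow> bool"
    and A :: "'a set" and leA :: "'a \<Rightarrow> 'a \<Rightarrow> bool"
    and B :: "'b set" and leB :: "'b \<Rightarrow> 'b \<Rightarrow> bool"
    and p :: "'a \<Rightarrow> 'b"
  assumes "is_poset X leX" and "finite X" and "dim_le_one X leX"
    and "is_poset A leA" and "is_poset B leB"
    and "poset_map A leA B leB p" and "acyclic_fibration A leA B leB p"
  shows "lifts_against X leX A leA B leB p"
proof -
  \<comment> \<open>only the absence of chains x < y < z is used, not that leX is an order\<close>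
  interpret poset_acyclic_fibration A leA B leB p
    using assms(4-7) by unfold_locales
  show ?thesis using lifts_against_dim_le_one assms(2,3) by blast
qed

end
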